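(* Each of the following eight sets of four generalized Bell states in $\mathbb{C}^4\otimes\mathbb{C}^4$ is perfectly distinguishable by one-way LOCC using only projective measurements: $\{\ket{\psi_{00}}\}\cup T$ with $T$ one of $\{\ket{\psi_{01}},\ket{\psi_{02}},\ket{\psi_{11}}\}$, $\{\ket{\psi_{01}},\ket{\psi_{02}},\ket{\psi_{31}}\}$, $\{\ket{\psi_{01}},\ket{\psi_{10}},\ket{\psi_{23}}\}$, $\{\ket{\psi_{01}},\ket{\psi_{11}},\ket{\psi_{22}}\}$, $\{\ket{\psi_{01}},\ket{\psi_{22}},\ket{\psi_{31}}\}$, $\{\ket{\psi_{01}},\ket{\psi_{23}},\ket{\psi_{30}}\}$, $\{\ket{\psi_{02}},\ket{\psi_{11}},\ket{\psi_{21}}\}$, $\{\ket{\psi_{02}},\ket{\psi_{21}},\ket{\psi_{31}}\}$.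
   Context: Generalized Bell states in $\mathbb{C}^4\otimes\mathbb{C}^4$ (Alice holds the first factor, Bob the second): $\ket{\psi_{nm}}=\frac12\sum_{j=0}^{3}e^{2\pi i jn/4}\ket{j}_A\ket{j\oplus_4 m}_B$ for $n,m\in\{0,1,2,3\}$, where $j\oplus_4 m=(j+m)\bmod 4$. Perfect distinguishability by one-way LOCC using only projective measurements means: one party performs a projective measurement on her subsystem, communicates the outcome classically, and the other party then performs a projective measurement (depending on that outcome) whose result identifies with certainty which state of the set was shared. *)

theory Defs
  imports Complex_Main
begin

text \<open>Operators on \<open>\<complex>\<^sup>4\<close> are represented as functions
  \<open>nat \<Rightarrow> nat \<Rightarrow> complex\<close> of which only the entries with indices \<open>< 4\<close> matter
  (computational basis \<open>|0>,...,|3>\<close>). Vectors of \<open>\<complex>\<^sup>4 \<otimes> \<complex>\<^sup>4\<close> are represented as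
  \<open>nat \<Rightarrow> nat \<Rightarrow> complex\<close>, \<open>v j k\<close> being the coefficient of \<open>|j>_A |k>_B\<close>
  (again only \<open>j, k < 4\<close> matter).\<close>

type_synonym cmat = "nat \<Rightarrow> nat \<Rightarrow> complex"
type_synonym bvec = "nat \<Rightarrow> nat \<Rightarrow> complex"

definition bell :: "nat \<Rightarrow> nat \<Rightarrow> bvec" where
  "bell n m = (\<lambda>j k. if j < 4 \<and> k = (j + m) mod 4
      then exp (2 * pi * \<i> * of_nat (j * n) / 4) / 2 else 0)"

definition mmul :: "cmat \<Rightarrow> cmat \<Rightarrow> cmat" where
  "mmul A B = (\<lambda>i k. \<Sum>j<4. A i j * B j k)"

definition is_projector :: "cmat \<Rightarrow> bool" where
  "is_projector P \<longleftrightarrow> (\<forall>i<4. \<forall>j<4. mmul P P i j = P i j \<and> cnj (P j i) = P i j)"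

definition proj_meas :: "cmat list \<Rightarrow> bool" where
  "proj_meas Ps \<longleftrightarrow>
     (\<forall>a<length Ps. is_projector (Ps ! a)) \<and>
     (\<forall>a<length Ps. \<forall>b<length Ps. a \<noteq> b \<longrightarrow>
        (\<forall>i<4. \<forall>j<4. mmul (Ps ! a) (Ps ! b) i j = 0)) \<and>
     (\<forall>i<4. \<forall>j<4. (\<Sum>a<length Ps. (Ps ! a) i j) = (if i = j then 1 else 0))"

definition tensor_apply :: "cmat \<Rightarrow> cmat \<Rightarrow> bvec \<Rightarrow> bvec" where
  "tensor_apply P Q v = (\<lambda>j k. \<Sum>j'<4. \<Sum>k'<4. P j j' * Q k k' * v j' k')"

definition bvec_zero :: "bvec \<Rightarrow> bool" where
  "bvec_zero v \<longleftrightarrow> (\<forall>j<4. \<forall>k<4. v j k = 0)"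

text \<open>One-way LOCC with projective measurements, Alice measuring first:
  Alice measures \<open>Ps\<close>, announces outcome \<open>a\<close>, Bob measures \<open>Qs a\<close> with outcome \<open>b\<close>,
  and the guess \<open>g a b\<close> must equal the label of the shared state whenever the outcome
  pair \<open>(a,b)\<close> occurs with nonzero probability, i.e. \<open>(P_a \<otimes> Q^a_b) \<psi> \<noteq> 0\<close>.\<close>
definition oneway_AB :: "(nat \<times> nat) set \<Rightarrow> bool" where
  "oneway_AB S \<longleftrightarrow> (\<exists>Ps Qs g. proj_meas Ps \<and> (\<forall>a<length Ps. proj_meas (Qs a)) \<and>
     (\<forall>(n, m)\<in>S. \<forall>a<length Ps. \<forall>b<length (Qs a).
        \<not> bvec_zero (tensor_apply (Ps ! a) (Qs a ! b) (bell n m)) \<longrightarrow> g a b = (n, m)))"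

definition oneway_BA :: "(nat \<times> nat) set \<Rightarrow> bool" where
  "oneway_BA S \<longleftrightarrow> (\<exists>Qs Ps g. proj_meas Qs \<and> (\<forall>b<length Qs. proj_meas (Ps b)) \<and>
     (\<forall>(n, m)\<in>S. \<forall>b<length Qs. \<forall>a<length (Ps b).
        \<not> bvec_zero (tensor_apply (Ps b ! a) (Qs ! b) (bell n m)) \<longrightarrow> g b a = (n, m)))"

definition oneway_proj_distinguishable :: "(nat \<times> nat) set \<Rightarrow> bool" where
  "oneway_proj_distinguishable S \<longleftrightarrow> oneway_AB S \<or> oneway_BA S"

end

theory Submission
  imports Defs
begin

text \<open>Both parties measure in the same basis of \<open>\<complex>\<^sup>4\<close>, spanned by
  \<open>|1> \<pm> i|3>\<close> and \<open>|0> \<pm> i|2>\<close>, and Bob ignores Alice's outcome. Outcome \<open>(a, b)\<close>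
  is possible for \<open>\<psi>\<^sub>n\<^sub>m\<close> iff the product basis vector \<open>a \<otimes> b\<close> overlaps \<open>\<psi>\<^sub>n\<^sub>m\<close>;
  the Bell phases are powers of \<open>i\<close>, so the 16 overlaps of each state are computed
  exactly, and for each of the eight sets no outcome pair overlaps two of its states.\<close>

lemma exp_two_pi_i_quarter: "exp (2 * pi * \<i> * of_nat k / 4) = \<i> ^ k"
proof -
  have "exp (2 * pi * \<i> * of_nat k / 4) = exp (of_nat k * (\<i> * of_real (pi / 2)))"
    by (rule arg_cong[where f = exp]) (simp add: field_simps)
  also have "\<dots> = exp (\<i> * of_real (pi / 2)) ^ k"
    by (rule exp_of_nat_mult)
  also have "exp (\<i> * of_real (pi / 2)) = \<i>"
    using cis_conv_exp[of "pi / 2"] by (simp add: complex_eq_iff)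
  finally show ?thesis .
qed

lemma i_power_mod4: "\<i> ^ k = \<i> ^ (k mod 4)"
proof -
  have "\<i> ^ k = (\<i> ^ 4) ^ (k div 4) * \<i> ^ (k mod 4)"
    by (metis div_mult_mod_eq power_add power_mult mult.commute)
  then show ?thesis
    by (simp add: power_mult[of _ 2 2, simplified])
qed

lemma bell_altdef:
  "bell n m = (\<lambda>j k. if j < 4 \<and> k = (j + m) mod 4 then \<i> ^ (j * n mod 4) / 2 else 0)"
  unfolding bell_def exp_two_pi_i_quarter by (simp only: i_power_mod4[of "j * n" for j])

lemma i_cubed: "\<i> ^ 3 = - \<i>"
  by (simp add: eval_nat_numeral)

lemma sum_lessThan_4: "(\<Sum>j<4::nat. f j) = f 0 + f 1 + f 2 + (f 3 :: complex)"
  by (simp add: eval_nat_numeral)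

lemma all_lessThan_4: "(\<forall>j<4::nat. P j) \<longleftrightarrow> P 0 \<and> P 1 \<and> P 2 \<and> P 3"
  by (auto simp add: eval_nat_numeral less_Suc_eq)

lemma oneway_AB_product_measurement:
  assumes "proj_meas Ps" and "proj_meas Qs"
    and separates: "\<And>a b n m n' m'. a < length Ps \<Longrightarrow> b < length Qs \<Longrightarrow>
      (n, m) \<in> S \<Longrightarrow> (n', m') \<in> S \<Longrightarrow>
      \<not> bvec_zero (tensor_apply (Ps ! a) (Qs ! b) (bell n m)) \<Longrightarrow>
      \<not> bvec_zero (tensor_apply (Ps ! a) (Qs ! b) (bell n' m')) \<Longrightarrow> (n, m) = (n', m')"
  shows "oneway_AB S"
proof -
  define occurs where
    "occurs a b s \<longleftrightarrow> s \<in> S \<and> \<not> bvec_zero (tensor_apply (Ps ! a) (Qs ! b) (bell (fst s) (snd s)))"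
    for a b s
  have "g a b = (n, m)"
    if "(n, m) \<in> S" "a < length Ps" "b < length Qs"
      "\<not> bvec_zero (tensor_apply (Ps ! a) (Qs ! b) (bell n m))"
      and g_def: "g = (\<lambda>a b. SOME s. occurs a b s)" for g a b n m
  proof -
    have "occurs a b (n, m)"
      using that by (simp add: occurs_def)
    then have "occurs a b (g a b)"
      unfolding g_def by (rule someI)
    then show ?thesis
      using separates[of a b "fst (g a b)" "snd (g a b)" n m] that by (simp add: occurs_def)
  qed
  then show ?thesis
    unfolding oneway_AB_def using assms(1,2)
    by (intro exI[of _ Ps] exI[of _ "\<lambda>_. Qs"] exI[of _ "\<lambda>a b. SOME s. occurs a b s"]) auto
qed

text \<open>Unnormalised basis vectors (squared norm \<open>2\<close>, hence the factor \<open>1/2\<close> below).\<close>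
definition basis_vec :: "nat \<Rightarrow> nat \<Rightarrow> complex" where
  "basis_vec a j = [[0, 1, 0, \<i>], [0, 1, 0, -\<i>], [1, 0, \<i>, 0], [1, 0, -\<i>, 0]] ! a ! j"

definition basis_proj :: "nat \<Rightarrow> cmat" where
  "basis_proj a = (\<lambda>i j. basis_vec a i * cnj (basis_vec a j) / 2)"

definition basis_meas :: "cmat list" where
  "basis_meas = map basis_proj [0..<4]"

lemma proj_meas_basis_meas: "proj_meas basis_meas"
  unfolding proj_meas_def basis_meas_def
  by (simp add: all_lessThan_4 is_projector_def mmul_def sum_lessThan_4 basis_proj_def basis_vec_def)

definition overlap :: "nat \<Rightarrow> nat \<Rightarrow> nat \<times> nat \<Rightarrow> complex" where
  "overlap a b s =
     (\<Sum>j<4. \<Sum>k<4. cnj (basis_vec a j) * cnj (basis_vec b k) * bell (fst s) (snd s) j k)"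

lemma tensor_apply_basis_proj:
  "tensor_apply (basis_proj a) (basis_proj b) v j k =
     basis_vec a j * basis_vec b k / 4 *
     (\<Sum>j'<4. \<Sum>k'<4. cnj (basis_vec a j') * cnj (basis_vec b k') * v j' k')"
  unfolding tensor_apply_def basis_proj_def by (simp add: sum_distrib_left mult_ac)

lemma overlap_nonzero:
  "\<not> bvec_zero (tensor_apply (basis_proj a) (basis_proj b) (bell n m)) \<Longrightarrow> overlap a b (n, m) \<noteq> 0"
  unfolding bvec_zero_def overlap_def by (auto simp: tensor_apply_basis_proj)

definition overlap_separates :: "(nat \<times> nat) set \<Rightarrow> bool" where
  "overlap_separates S \<longleftrightarrow>
     (\<forall>a<4. \<forall>b<4. \<forall>s\<in>S. \<forall>s'\<in>S. overlap a b s \<noteq> 0 \<longrightarrow> overlap a b s' \<noteq> 0 \<longrightarrow> s = s')"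

lemma oneway_AB_if_overlap_separates:
  assumes "overlap_separates S"
  shows "oneway_AB S"
proof (rule oneway_AB_product_measurement[OF proj_meas_basis_meas proj_meas_basis_meas])
  fix a b n m n' m'
  assume "a < length basis_meas" "b < length basis_meas" "(n, m) \<in> S" "(n', m') \<in> S"
    and "\<not> bvec_zero (tensor_apply (basis_meas ! a) (basis_meas ! b) (bell n m))"
    and "\<not> bvec_zero (tensor_apply (basis_meas ! a) (basis_meas ! b) (bell n' m'))"
  then have "a < 4" "b < 4" "overlap a b (n, m) \<noteq> 0" "overlap a b (n', m') \<noteq> 0"
    by (auto simp: basis_meas_def dest: overlap_nonzero)
  then show "(n, m) = (n', m')"
    using assms \<open>(n, m) \<in> S\<close> \<open>(n', m') \<in> S\<close> unfolding overlap_separates_def by blast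
qed

lemma overlap_separates_bell_quadruples:
  assumes "T \<in> {{(0,1), (0,2), (1,1)}, {(0,1), (0,2), (3,1)}, {(0,1), (1,0), (2,3)},
               {(0,1), (1,1), (2,2)}, {(0,1), (2,2), (3,1)}, {(0,1), (2,3), (3,0)},
               {(0,2), (1,1), (2,1)}, {(0,2), (2,1), (3,1)}}"
  shows "overlap_separates ({(0, 0)} \<union> T)"
  using assms unfolding overlap_separates_def all_lessThan_4
  by (elim insertE emptyE)
     (simp_all add: overlap_def bell_altdef sum_lessThan_4 basis_vec_def i_cubed)

theorem theorem4:
  assumes "T \<in> {{(0,1), (0,2), (1,1)}, {(0,1), (0,2), (3,1)}, {(0,1), (1,0), (2,3)},
               {(0,1), (1,1), (2,2)}, {(0,1), (2,2), (3,1)}, {(0,1), (2,3), (3,0)},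
               {(0,2), (1,1), (2,1)}, {(0,2), (2,1), (3,1)}}"
  shows "oneway_proj_distinguishable ({(0::nat, 0::nat)} \<union> T)"
  using oneway_AB_if_overlap_separates[OF overlap_separates_bell_quadruples[OF assms]]
  unfolding oneway_proj_distinguishable_def ..

end
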